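(* Let $d=1$, $s=1$, $\Omega=[-L,L]$, $\mathscr{D}=\frac{d}{dx}$, $\lambda_n>0$, $\mu_n\ge0$, and $\gamma_n=\sqrt{\lambda_n/(\lambda_n+\mu_n)}$. Then the reproducing kernel $K$ of $H^1([-L,L])$ equipped with the squared norm $\lambda_n\|f\|^2_{H^1([-L,L])}+\mu_n\|f'\|^2_{L^2([-L,L])}$ is given, for all $x,y\in[-L,L]$, by \[K(x,y)=\frac{\gamma_n}{2\lambda_n\sinh(2\gamma_nL)}\Big((\cosh(2\gamma_nL)+\cosh(2\gamma_nx))\cosh(\gamma_n(x-y))+\big((1-2\cdot\mathbf{1}_{x>y})\sinh(2\gamma_nL)-\sinh(2\gamma_nx)\big)\sinh(\gamma_n(x-y))\Big).\]
   Context: $H^1([-L,L])$ is the usual Sobolev space with $\|f\|^2_{H^1([-L,L])}=\int_{-L}^L(f^2+f'^2)$; its elements are identified with continuous representatives. The reproducing kernel $K$ is the function with $K(x,\cdot)$ in the space for each $x$ and $f(x)=\langle f,K(x,\cdot)\rangle$ for the inner product associated with the given norm. *)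

theory Defs
  imports "HOL-Analysis.Analysis"
begin

text \<open>g is a weak derivative of f on [-L,L] in the H^1 sense: g is measurable and
  square integrable on [-L,L] and f is (the continuous representative) f(x) = f(-L) + int_{-L}^x g.\<close>
definition weak_deriv_H1 :: "real \<Rightarrow> (real \<Rightarrow> real) \<Rightarrow> (real \<Rightarrow> real) \<Rightarrow> bool" where
  "weak_deriv_H1 L f g \<longleftrightarrow>
     set_borel_measurable lborel {-L..L} g \<and>
     set_integrable lborel {-L..L} (\<lambda>t. (g t)^2) \<and>
     (\<forall>x\<in>{-L..L}. f x = f (-L) + (LINT t:{-L..x}|lborel. g t))"

definition H1 :: "real \<Rightarrow> (real \<Rightarrow> real) set" where
  "H1 L = {f. \<exists>g. weak_deriv_H1 L f g}"

text \<open>Inner product associated with the squared norm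
  lam * ||f||^2_{H^1} + mu * ||f'||^2_{L^2}, given functions with their weak derivatives.\<close>
definition H1_inner :: "real \<Rightarrow> real \<Rightarrow> real \<Rightarrow> (real \<Rightarrow> real) \<Rightarrow> (real \<Rightarrow> real)
    \<Rightarrow> (real \<Rightarrow> real) \<Rightarrow> (real \<Rightarrow> real) \<Rightarrow> real" where
  "H1_inner L lam mu f f' h h' =
     lam * (LINT t:{-L..L}|lborel. f t * h t + f' t * h' t)
     + mu * (LINT t:{-L..L}|lborel. f' t * h' t)"

text \<open>K is a reproducing kernel of H^1([-L,L]) with the above inner product:
  K(x,.) lies in the space for each x in [-L,L], and f(x) = <f, K(x,.)> for all f in the space.
  (The inner product does not depend on the choice of weak derivatives, which agree a.e.)\<close>
definition is_reproducing_kernel_H1 :: "real \<Rightarrow> real \<Rightarrow> real \<Rightarrow> (real \<Rightarrow> real \<Rightarrow> real) \<Rightarrow> bool" where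
  "is_reproducing_kernel_H1 L lam mu K \<longleftrightarrow>
     (\<forall>x\<in>{-L..L}. \<exists>k. weak_deriv_H1 L (K x) k \<and>
        (\<forall>f f'. weak_deriv_H1 L f f' \<longrightarrow> f x = H1_inner L lam mu f f' (K x) k))"

end

theory Submission
  imports Defs
begin

text \<open>
  The kernel is the Green function of the Neumann problem \<open>-(lam + mu) u'' + lam u = \<delta>\<^sub>x\<close>
  on \<open>[-L, L]\<close>. With \<open>\<gamma>\<^sup>2 = lam / (lam + mu)\<close>, the functions \<open>u t = cosh (\<gamma> (L + t))\<close> and
  \<open>v t = cosh (\<gamma> (L - t))\<close> solve \<open>w'' = \<gamma>\<^sup>2 w\<close> with \<open>u' (-L) = 0\<close> and \<open>v' L = 0\<close>, and the kernel is
  \<open>K x y = u (min x y) v (max x y) / ((lam + mu) W)\<close> with \<open>W = u' v - u v'\<close> their Wronskian;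
  the stated formula is this product rewritten by the addition theorems.
  For \<open>f\<close> in \<open>H\<^sup>1\<close>, integrating \<open>f' \<partial>\<^sub>yK\<close> by parts on \<open>[-L, x]\<close> and on \<open>[x, L]\<close> turns
  \<open>\<langle>f, K x\<rangle>\<close> into \<open>(lam - (lam + mu) \<gamma>\<^sup>2) \<integral> f K\<close> plus boundary terms: the integral vanishes
  since \<open>(lam + mu) \<gamma>\<^sup>2 = lam\<close>, the terms at \<open>\<plusminus>L\<close> vanish by the Neumann conditions, and the jump
  of \<open>\<partial>\<^sub>yK\<close> at \<open>y = x\<close> leaves exactly \<open>f x\<close>.
  Uniqueness: the difference \<open>h\<close> of two kernels at \<open>x\<close> is orthogonal to everything, in particular
  to itself, so \<open>\<integral> h\<^sup>2 = 0\<close> and the continuous function \<open>h\<close> vanishes.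
\<close>

section \<open>Lebesgue integrals over compact intervals\<close>

lemma set_integral_FTC_Icc:
  fixes F f :: "real \<Rightarrow> real"
  assumes "a \<le> b" and "\<And>t. t \<in> {a..b} \<Longrightarrow> (F has_real_derivative f t) (at t)"
    and "continuous_on {a..b} f"
  shows "(LINT t:{a..b}|lborel. f t) = F b - F a"
  unfolding set_lebesgue_integral_def
  by (rule integral_FTC_atLeastAtMost)
    (use assms in \<open>auto simp: has_real_derivative_iff_has_vector_derivative[symmetric]
       intro: has_field_derivative_at_within\<close>)

lemma set_integral_Icc_piecewise:
  fixes f g h :: "real \<Rightarrow> real"
  assumes "a \<le> x" "x \<le> b"
    and g: "set_integrable lborel {a..x} g" and h: "set_integrable lborel {x..b} h"
    and fg: "\<And>t. t \<in> {a..x} \<Longrightarrow> f t = g t" and fh: "\<And>t. t \<in> {x<..b} \<Longrightarrow> f t = h t"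
  shows "set_integrable lborel {a..b} f"
    and "(LINT t:{a..b}|lborel. f t) = (LINT t:{a..x}|lborel. g t) + (LINT t:{x..b}|lborel. h t)"
proof -
  have ab: "{a..b} = {a..x} \<union> {x<..b}" using assms(1,2) by auto
  have f1: "set_integrable lborel {a..x} f"
    using g by (subst set_integrable_cong[OF refl refl fg])
  have "set_integrable lborel {x<..b} h" by (rule set_integrable_subset[OF h]) auto
  then have f2: "set_integrable lborel {x<..b} f"
    by (subst set_integrable_cong[OF refl refl fh])
  show "set_integrable lborel {a..b} f"
    unfolding ab by (rule set_integrable_Un[OF f1 f2]) auto
  have "(LINT t:{a..b}|lborel. f t) = (LINT t:{a..x}|lborel. f t) + (LINT t:{x<..b}|lborel. f t)"
    unfolding ab by (rule set_integral_Un[OF _ f1 f2]) auto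
  also have "(LINT t:{a..x}|lborel. f t) = (LINT t:{a..x}|lborel. g t)"
    by (rule set_lebesgue_integral_cong) (auto simp: fg)
  also have "(LINT t:{x<..b}|lborel. f t) = (LINT t:{x<..b}|lborel. h t)"
    by (rule set_lebesgue_integral_cong) (auto simp: fh)
  also have "\<dots> = (LINT t:{x..b}|lborel. h t)"
    using interval_integral_Ioc[of x b h] interval_integral_Icc[of x b h] assms(2) by simp
  finally show "(LINT t:{a..b}|lborel. f t) = (LINT t:{a..x}|lborel. g t) + (LINT t:{x..b}|lborel. h t)" .
qed

lemma continuous_on_set_integral_Icc:
  fixes g :: "real \<Rightarrow> real"
  assumes g: "set_integrable lborel {a..b} g"
  shows "continuous_on {a..b} (\<lambda>s. LINT t:{a..s}|lborel. g t)"
proof -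
  have "(LINT t:{a..s}|lborel. g t) = integral {a..s} g" if "s \<in> {a..b}" for s
    by (rule set_borel_integral_eq_integral(2), rule set_integrable_subset[OF g]) (use that in auto)
  moreover have "continuous_on {a..b} (\<lambda>s. integral {a..s} g)"
    by (intro indefinite_integral_continuous_1 set_borel_integral_eq_integral(1)[OF g])
  ultimately show ?thesis by (metis (no_types, lifting) continuous_on_eq)
qed

lemma set_borel_measurable_mult:
  fixes g h :: "'a \<Rightarrow> real"
  assumes "set_borel_measurable M A g" "set_borel_measurable M A h"
  shows "set_borel_measurable M A (\<lambda>t. g t * h t)"
proof -
  have "(\<lambda>t. indicator A t *\<^sub>R (g t * h t)) = (\<lambda>t. (indicator A t *\<^sub>R g t) * (indicator A t *\<^sub>R h t))"
    by (auto simp: fun_eq_iff indicator_def)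
  then show ?thesis using assms unfolding set_borel_measurable_def by simp
qed

lemma set_borel_measurable_diff:
  fixes g h :: "'a \<Rightarrow> real"
  assumes "set_borel_measurable M A g" "set_borel_measurable M A h"
  shows "set_borel_measurable M A (\<lambda>t. g t - h t)"
  using assms unfolding set_borel_measurable_def by (simp add: right_diff_distrib)

lemma set_integrable_Icc_if_square_integrable:
  fixes g :: "real \<Rightarrow> real"
  assumes "set_borel_measurable lborel {a..b} g" "set_integrable lborel {a..b} (\<lambda>t. (g t)^2)"
  shows "set_integrable lborel {a..b} g"
proof (rule set_integrable_bound[where f="\<lambda>t. 1 + (g t)^2"])
  have "set_integrable lborel {a..b} (\<lambda>_. 1::real)" by (rule borel_integrable_atLeastAtMost') simp
  then show "set_integrable lborel {a..b} (\<lambda>t. 1 + (g t)^2)" using assms(2) by simp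
  have "\<bar>y\<bar> \<le> 1 + y^2" for y :: real
    using zero_le_power2[of "\<bar>y\<bar> - 1"] by (simp add: power2_diff)
  then show "AE t in lborel. t \<in> {a..b} \<longrightarrow> norm (g t) \<le> norm (1 + (g t)^2)"
    by (intro AE_I2) (simp add: add_nonneg_nonneg)
qed (use assms in auto)

lemma set_integrable_mult_if_square_integrable:
  fixes u v :: "real \<Rightarrow> real"
  assumes "set_borel_measurable lborel A u" "set_borel_measurable lborel A v"
    "set_integrable lborel A (\<lambda>t. (u t)^2)" "set_integrable lborel A (\<lambda>t. (v t)^2)"
  shows "set_integrable lborel A (\<lambda>t. u t * v t)"
proof (rule set_integrable_bound[where f="\<lambda>t. (u t)^2 + (v t)^2"])
  show "set_integrable lborel A (\<lambda>t. (u t)^2 + (v t)^2)" using assms(3,4) by simp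
  show "set_borel_measurable lborel A (\<lambda>t. u t * v t)" by (rule set_borel_measurable_mult[OF assms(1,2)])
  have "\<bar>y * z\<bar> \<le> y^2 + z^2" for y z :: real
  proof -
    have "2 * (\<bar>y\<bar> * \<bar>z\<bar>) \<le> y^2 + z^2"
      using zero_le_power2[of "\<bar>y\<bar> - \<bar>z\<bar>"] by (simp add: power2_diff)
    moreover have "0 \<le> \<bar>y\<bar> * \<bar>z\<bar>" by simp
    ultimately show ?thesis unfolding abs_mult by linarith
  qed
  then show "AE t in lborel. t \<in> A \<longrightarrow> norm (u t * v t) \<le> norm ((u t)^2 + (v t)^2)"
    by (intro AE_I2) simp
qed

lemma set_integrable_mult_continuous_on:
  fixes g h :: "real \<Rightarrow> real"
  assumes g: "set_integrable lborel {a..b} g" and h: "continuous_on {a..b} h"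
  shows "set_integrable lborel {a..b} (\<lambda>t. g t * h t)"
proof -
  obtain B where B: "\<forall>t\<in>{a..b}. \<bar>h t\<bar> \<le> B"
    using compact_imp_bounded[OF compact_continuous_image[OF h compact_Icc]]
    unfolding bounded_iff by auto
  show ?thesis
  proof (rule set_integrable_bound[where f="\<lambda>t. B * g t"])
    show "set_integrable lborel {a..b} (\<lambda>t. B * g t)" using g by simp
    have "set_borel_measurable lborel {a..b} g"
      using g unfolding set_integrable_def set_borel_measurable_def by (rule borel_measurable_integrable)
    moreover have "set_borel_measurable lborel {a..b} h"
      unfolding set_borel_measurable_def using borel_measurable_continuous_on_indicator[OF _ h] by simp
    ultimately show "set_borel_measurable lborel {a..b} (\<lambda>t. g t * h t)"
      by (rule set_borel_measurable_mult)
    have "norm (g t * h t) \<le> norm (B * g t)" if "t \<in> {a..b}" for t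
    proof -
      have "\<bar>h t\<bar> \<le> B" using B that by blast
      then have "\<bar>g t\<bar> * \<bar>h t\<bar> \<le> \<bar>g t\<bar> * B" by (rule mult_left_mono) simp
      moreover have "0 \<le> B" using \<open>\<bar>h t\<bar> \<le> B\<close> by linarith
      ultimately show ?thesis by (simp add: abs_mult mult.commute)
    qed
    then show "AE t in lborel. t \<in> {a..b} \<longrightarrow> norm (g t * h t) \<le> norm (B * g t)"
      by (intro AE_I2) blast
  qed
qed

text \<open>Fubini on the triangle \<open>a \<le> t \<le> s \<le> b\<close>.\<close>

lemma set_integral_indefinite_integral_swap:
  fixes g \<psi> :: "real \<Rightarrow> real"
  assumes g: "set_integrable lborel {a..b} g" and \<psi>: "continuous_on {a..b} \<psi>"
  shows "(LINT s:{a..b}|lborel. \<psi> s * (LINT t:{a..s}|lborel. g t))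
       = (LINT t:{a..b}|lborel. g t * (LINT s:{t..b}|lborel. \<psi> s))"
proof -
  define G where "G = (\<lambda>t. indicator {a..b} t * g t)"
  define \<Psi> where "\<Psi> = (\<lambda>s. indicator {a..b} s * \<psi> s)"
  define H where "H s t = (if t \<le> s then \<Psi> s * G t else 0)" for s t
  have G: "integrable lborel G" using g by (simp add: set_integrable_def G_def)
  have \<Psi>: "integrable lborel \<Psi>"
    using borel_integrable_atLeastAtMost'[OF \<psi>] by (simp add: set_integrable_def \<Psi>_def)
  have [measurable]: "G \<in> borel_measurable lborel" "\<Psi> \<in> borel_measurable lborel"
    using G \<Psi> by (auto intro: borel_measurable_integrable)
  have Hm[measurable]: "(\<lambda>(s, t). H s t) \<in> borel_measurable (lborel \<Otimes>\<^sub>M lborel)"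
    unfolding H_def by measurable
  have H_bound: "\<bar>H s t\<bar> \<le> \<bar>\<Psi> s\<bar> * \<bar>G t\<bar>" for s t by (simp add: H_def abs_mult)
  have H_integrable: "integrable lborel (H s)" for s
    by (rule Bochner_Integration.integrable_bound[where f="\<lambda>t. \<Psi> s * G t"])
      (use G H_bound in \<open>auto simp: abs_mult\<close>)
  have "integrable (lborel \<Otimes>\<^sub>M lborel) (\<lambda>(s, t). H s t)"
  proof (rule lborel_pair.Fubini_integrable[OF Hm])
    show "AE s in lborel. integrable lborel (\<lambda>t. case (s, t) of (s, t) \<Rightarrow> H s t)"
      using H_integrable by simp
    show "integrable lborel (\<lambda>s. LINT t|lborel. norm (case (s, t) of (s, t) \<Rightarrow> H s t))"
    proof (rule Bochner_Integration.integrable_bound[where f="\<lambda>s. \<bar>\<Psi> s\<bar> * (LINT t|lborel. \<bar>G t\<bar>)"])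
      show "integrable lborel (\<lambda>s. \<bar>\<Psi> s\<bar> * (LINT t|lborel. \<bar>G t\<bar>))" using \<Psi> by simp
      have "(LINT t|lborel. \<bar>H s t\<bar>) \<le> \<bar>\<Psi> s\<bar> * (LINT t|lborel. \<bar>G t\<bar>)" for s
        using integral_mono[OF integrable_abs[OF H_integrable] _ H_bound, of s] G by simp
      then show "AE s in lborel. norm (LINT t|lborel. norm (case (s, t) of (s, t) \<Rightarrow> H s t))
          \<le> norm (\<bar>\<Psi> s\<bar> * (LINT t|lborel. \<bar>G t\<bar>))"
        by (intro AE_I2) (simp add: integral_nonneg_AE)
    qed (rule lborel.borel_measurable_lebesgue_integral, simp, measurable)
  qed
  then have "(LINT t|lborel. LINT s|lborel. H s t) = (LINT s|lborel. LINT t|lborel. H s t)"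
    by (rule lborel_pair.Fubini_integral)
  moreover have "(LINT t|lborel. H s t) = indicator {a..b} s *\<^sub>R (\<psi> s * (LINT t:{a..s}|lborel. g t))" for s
  proof -
    have "H s t = (indicator {a..b} s * \<psi> s) * (indicator {a..s} t *\<^sub>R g t)" for t
      by (auto simp: H_def \<Psi>_def G_def indicator_def)
    then show ?thesis by (simp add: set_lebesgue_integral_def)
  qed
  moreover have "(LINT s|lborel. H s t) = indicator {a..b} t *\<^sub>R (g t * (LINT s:{t..b}|lborel. \<psi> s))" for t
  proof -
    have "H s t = (indicator {a..b} t * g t) * (indicator {t..b} s *\<^sub>R \<psi> s)" for s
      by (auto simp: H_def \<Psi>_def G_def indicator_def)
    then show ?thesis by (simp add: set_lebesgue_integral_def)
  qed
  ultimately show ?thesis by (simp add: set_lebesgue_integral_def)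
qed

text \<open>The library's integration by parts needs \<open>F\<close> differentiable everywhere; here \<open>F\<close> is only
  an indefinite integral, so the proof goes through Fubini.\<close>

lemma set_integral_by_parts_indefinite:
  fixes g F \<phi> \<phi>' :: "real \<Rightarrow> real"
  assumes "a \<le> b" and g: "set_integrable lborel {a..b} g"
    and F: "\<And>s. s \<in> {a..b} \<Longrightarrow> F s = F a + (LINT t:{a..s}|lborel. g t)"
    and \<phi>: "\<And>t. t \<in> {a..b} \<Longrightarrow> (\<phi> has_real_derivative \<phi>' t) (at t)"
    and \<phi>': "continuous_on {a..b} \<phi>'"
  shows "(LINT t:{a..b}|lborel. g t * \<phi> t) = F b * \<phi> b - F a * \<phi> a - (LINT t:{a..b}|lborel. F t * \<phi>' t)"
proof -
  define G where "G s = (LINT t:{a..s}|lborel. g t)" for s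
  have G_cont: "continuous_on {a..b} G"
    unfolding G_def by (rule continuous_on_set_integral_Icc[OF g])
  have \<phi>_cont: "continuous_on {a..b} \<phi>"
    using \<phi> by (intro continuous_at_imp_continuous_on) (blast intro: DERIV_isCont)
  have "(LINT t:{a..b}|lborel. F t * \<phi>' t) = (LINT t:{a..b}|lborel. F a * \<phi>' t + \<phi>' t * G t)"
  proof (intro set_lebesgue_integral_cong ballI allI impI)
    fix t assume "t \<in> {a..b}"
    then show "F t * \<phi>' t = F a * \<phi>' t + \<phi>' t * G t"
      using F[of t] by (simp add: G_def algebra_simps)
  qed simp
  also have "\<dots> = F a * (\<phi> b - \<phi> a) + (LINT t:{a..b}|lborel. \<phi>' t * G t)"
    using set_integral_FTC_Icc[OF \<open>a \<le> b\<close> \<phi> \<phi>']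
      borel_integrable_atLeastAtMost'[OF \<phi>'] borel_integrable_atLeastAtMost'[OF continuous_on_mult[OF \<phi>' G_cont]]
    by simp
  also have "(LINT t:{a..b}|lborel. \<phi>' t * G t) = (LINT t:{a..b}|lborel. g t * (\<phi> b - \<phi> t))"
  proof -
    have "(LINT s:{t..b}|lborel. \<phi>' s) = \<phi> b - \<phi> t" if "t \<in> {a..b}" for t
      by (rule set_integral_FTC_Icc) (use that \<phi> in \<open>auto intro: continuous_on_subset[OF \<phi>']\<close>)
    then show ?thesis
      unfolding G_def set_integral_indefinite_integral_swap[OF g \<phi>']
      by (intro set_lebesgue_integral_cong) auto
  qed
  also have "(LINT t:{a..b}|lborel. g t * (\<phi> b - \<phi> t)) = \<phi> b * (F b - F a) - (LINT t:{a..b}|lborel. g t * \<phi> t)"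
  proof -
    have "(LINT t:{a..b}|lborel. g t) = F b - F a" using F[of b] \<open>a \<le> b\<close> by simp
    then show ?thesis using set_integrable_mult_continuous_on[OF g \<phi>_cont] g
      by (simp add: right_diff_distrib mult.commute)
  qed
  finally show ?thesis by (simp add: algebra_simps)
qed

section \<open>Weak derivatives and the inner product\<close>

lemma weak_deriv_H1_set_integrable:
  assumes "weak_deriv_H1 L f f'"
  shows "set_integrable lborel {-L..L} f'"
  using assms set_integrable_Icc_if_square_integrable unfolding weak_deriv_H1_def by blast

lemma weak_deriv_H1_continuous_on:
  assumes wd: "weak_deriv_H1 L f f'"
  shows "continuous_on {-L..L} f"
proof -
  have "continuous_on {-L..L} (\<lambda>x. f (-L) + (LINT t:{-L..x}|lborel. f' t))"
    by (intro continuous_intros continuous_on_set_integral_Icc weak_deriv_H1_set_integrable[OF wd])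
  moreover have "f x = f (-L) + (LINT t:{-L..x}|lborel. f' t)" if "x \<in> {-L..L}" for x
    using wd that unfolding weak_deriv_H1_def by blast
  ultimately show ?thesis by (metis (no_types, lifting) continuous_on_eq)
qed

lemma weak_deriv_H1_eq_integral_from:
  assumes wd: "weak_deriv_H1 L f f'" and "-L \<le> a" "a \<le> s" "s \<le> L"
  shows "f s = f a + (LINT t:{a..s}|lborel. f' t)"
proof -
  have f': "set_integrable lborel {-L..L} f'" using weak_deriv_H1_set_integrable[OF wd] .
  have "(LINT t:{-L..s}|lborel. f' t) = (LINT t:{-L..a}|lborel. f' t) + (LINT t:{a..s}|lborel. f' t)"
    by (rule set_integral_Icc_piecewise(2)) (use assms in \<open>auto intro: set_integrable_subset[OF f']\<close>)
  moreover have "f x = f (-L) + (LINT t:{-L..x}|lborel. f' t)" if "x \<in> {-L..L}" for x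
    using wd that unfolding weak_deriv_H1_def by blast
  ultimately show ?thesis using assms by (metis (no_types) add.assoc atLeastAtMost_iff order.trans)
qed

lemma weak_deriv_H1_diff:
  assumes wd1: "weak_deriv_H1 L f1 g1" and wd2: "weak_deriv_H1 L f2 g2"
  shows "weak_deriv_H1 L (\<lambda>t. f1 t - f2 t) (\<lambda>t. g1 t - g2 t)"
  unfolding weak_deriv_H1_def
proof (intro conjI ballI)
  show m: "set_borel_measurable lborel {-L..L} (\<lambda>t. g1 t - g2 t)"
    using wd1 wd2 unfolding weak_deriv_H1_def by (blast intro: set_borel_measurable_diff)
  show "set_integrable lborel {-L..L} (\<lambda>t. (g1 t - g2 t)^2)"
  proof (rule set_integrable_bound[where f="\<lambda>t. 2 * (g1 t)^2 + 2 * (g2 t)^2"])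
    show "set_integrable lborel {-L..L} (\<lambda>t. 2 * (g1 t)^2 + 2 * (g2 t)^2)"
      using wd1 wd2 unfolding weak_deriv_H1_def by simp
    show "set_borel_measurable lborel {-L..L} (\<lambda>t. (g1 t - g2 t)^2)"
      using set_borel_measurable_mult[OF m m] by (simp add: power2_eq_square)
    have "(y - z)^2 \<le> 2 * y^2 + 2 * z^2" for y z :: real
      using zero_le_power2[of "y + z"] by (simp add: power2_diff power2_sum)
    then show "AE t in lborel. t \<in> {-L..L} \<longrightarrow> norm ((g1 t - g2 t)^2) \<le> norm (2 * (g1 t)^2 + 2 * (g2 t)^2)"
      by (intro AE_I2) simp
  qed
  fix s assume s: "s \<in> {-L..L}"
  have "set_integrable lborel {-L..s} g1" "set_integrable lborel {-L..s} g2"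
    using s weak_deriv_H1_set_integrable[OF wd1] weak_deriv_H1_set_integrable[OF wd2]
    by (auto intro: set_integrable_subset)
  moreover have "f1 s = f1 (-L) + (LINT t:{-L..s}|lborel. g1 t)" "f2 s = f2 (-L) + (LINT t:{-L..s}|lborel. g2 t)"
    using wd1 wd2 s unfolding weak_deriv_H1_def by blast+
  ultimately show "f1 s - f2 s = f1 (-L) - f2 (-L) + (LINT t:{-L..s}|lborel. g1 t - g2 t)"
    by simp
qed

lemma weak_deriv_H1_piecewise:
  fixes A B A' B' K :: "real \<Rightarrow> real"
  assumes x: "x \<in> {-L..L}"
    and A: "\<And>t. (A has_real_derivative A' t) (at t)" and B: "\<And>t. (B has_real_derivative B' t) (at t)"
    and A': "continuous_on UNIV A'" and B': "continuous_on UNIV B'"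
    and KA: "\<And>t. t \<le> x \<Longrightarrow> K t = A t" and KB: "\<And>t. x \<le> t \<Longrightarrow> K t = B t"
  shows "weak_deriv_H1 L K (\<lambda>t. if t \<le> x then A' t else B' t)"
  unfolding weak_deriv_H1_def
proof (intro conjI ballI)
  have [measurable]: "A' \<in> borel_measurable borel" "B' \<in> borel_measurable borel"
    using A' B' by (auto intro: borel_measurable_continuous_onI)
  show m: "set_borel_measurable lborel {-L..L} (\<lambda>t. if t \<le> x then A' t else B' t)"
    unfolding set_borel_measurable_def by measurable
  show "set_integrable lborel {-L..L} (\<lambda>t. (if t \<le> x then A' t else B' t)^2)"
  proof (rule set_integrable_bound[where f="\<lambda>t. (A' t)^2 + (B' t)^2"])
    show "set_integrable lborel {-L..L} (\<lambda>t. (A' t)^2 + (B' t)^2)"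
      by (intro borel_integrable_atLeastAtMost' continuous_intros continuous_on_subset[OF A']
          continuous_on_subset[OF B']) auto
    show "set_borel_measurable lborel {-L..L} (\<lambda>t. (if t \<le> x then A' t else B' t)^2)"
      using set_borel_measurable_mult[OF m m] by (simp add: power2_eq_square)
  qed (auto intro!: AE_I2)
  have FTC: "(LINT t:{a..b}|lborel. F' t) = F b - F a"
    if "a \<le> b" "\<And>t. (F has_real_derivative F' t) (at t)" "continuous_on UNIV F'" for a b F F'
    using that by (intro set_integral_FTC_Icc) (auto intro: continuous_on_subset)
  fix y assume y: "y \<in> {-L..L}"
  show "K y = K (-L) + (LINT t:{-L..y}|lborel. if t \<le> x then A' t else B' t)"
  proof (cases "y \<le> x")
    case True
    have "(LINT t:{-L..y}|lborel. if t \<le> x then A' t else B' t) = (LINT t:{-L..y}|lborel. A' t)"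
      by (rule set_lebesgue_integral_cong) (use True in auto)
    then show ?thesis using True x y FTC[OF _ A A', of "-L" y] KA[of y] KA[of "-L"] by simp
  next
    case False
    have "(LINT t:{-L..y}|lborel. if t \<le> x then A' t else B' t)
        = (LINT t:{-L..x}|lborel. A' t) + (LINT t:{x..y}|lborel. B' t)"
      using x y False
      by (intro set_integral_Icc_piecewise(2) borel_integrable_atLeastAtMost'
          continuous_on_subset[OF A'] continuous_on_subset[OF B']) auto
    then show ?thesis
      using False x y FTC[OF _ A A', of "-L" x] FTC[OF _ B B', of x y] KA[of x] KB[of x] KA[of "-L"] KB[of y]
      by simp
  qed
qed

lemma weak_deriv_H1_integral_by_parts:
  fixes \<phi> \<phi>' :: "real \<Rightarrow> real"
  assumes wd: "weak_deriv_H1 L f f'" and "-L \<le> a" "a \<le> b" "b \<le> L"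
    and "\<And>t. t \<in> {a..b} \<Longrightarrow> (\<phi> has_real_derivative \<phi>' t) (at t)"
    and "continuous_on {a..b} \<phi>'"
  shows "(LINT t:{a..b}|lborel. f' t * \<phi> t) = f b * \<phi> b - f a * \<phi> a - (LINT t:{a..b}|lborel. f t * \<phi>' t)"
proof (rule set_integral_by_parts_indefinite[OF \<open>a \<le> b\<close> _ _ assms(5,6)])
  show "set_integrable lborel {a..b} f'"
    by (rule set_integrable_subset[OF weak_deriv_H1_set_integrable[OF wd]]) (use assms in auto)
  show "f s = f a + (LINT t:{a..s}|lborel. f' t)" if "s \<in> {a..b}" for s
    by (rule weak_deriv_H1_eq_integral_from[OF wd]) (use assms that in auto)
qed

lemma weak_deriv_H1_integral_by_parts_eigen:
  fixes w w' :: "real \<Rightarrow> real" and \<kappa> :: real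
  assumes wd: "weak_deriv_H1 L f f'" and "-L \<le> a" "a \<le> b" "b \<le> L"
    and w: "\<And>t. (w has_real_derivative w' t) (at t)" and w': "\<And>t. (w' has_real_derivative \<kappa> * w t) (at t)"
  shows "(LINT t:{a..b}|lborel. f' t * w' t) = f b * w' b - f a * w' a - \<kappa> * (LINT t:{a..b}|lborel. f t * w t)"
proof -
  have "continuous_on {a..b} w"
    using w by (intro continuous_at_imp_continuous_on) (blast intro: DERIV_isCont)
  then have "(LINT t:{a..b}|lborel. f' t * w' t)
      = f b * w' b - f a * w' a - (LINT t:{a..b}|lborel. f t * (\<kappa> * w t))"
    using assms(2-4) w' by (intro weak_deriv_H1_integral_by_parts[OF wd]) (auto intro: continuous_intros)
  also have "(LINT t:{a..b}|lborel. f t * (\<kappa> * w t)) = \<kappa> * (LINT t:{a..b}|lborel. f t * w t)"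
    by (simp flip: set_integral_mult_right add: ac_simps)
  finally show ?thesis .
qed

lemma weak_deriv_H1_set_integrable_mult:
  assumes wd1: "weak_deriv_H1 L f f'" and wd2: "weak_deriv_H1 L h h'"
  shows "set_integrable lborel {-L..L} (\<lambda>t. f t * h t)"
    and "set_integrable lborel {-L..L} (\<lambda>t. f' t * h' t)"
proof -
  show "set_integrable lborel {-L..L} (\<lambda>t. f t * h t)"
    by (intro borel_integrable_atLeastAtMost' continuous_on_mult
        weak_deriv_H1_continuous_on[OF wd1] weak_deriv_H1_continuous_on[OF wd2])
  show "set_integrable lborel {-L..L} (\<lambda>t. f' t * h' t)"
    using wd1 wd2 unfolding weak_deriv_H1_def by (blast intro: set_integrable_mult_if_square_integrable)
qed

lemma H1_inner_eq:
  assumes "weak_deriv_H1 L f f'" "weak_deriv_H1 L h h'"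
  shows "H1_inner L lam mu f f' h h'
       = lam * (LINT t:{-L..L}|lborel. f t * h t) + (lam + mu) * (LINT t:{-L..L}|lborel. f' t * h' t)"
  using weak_deriv_H1_set_integrable_mult[OF assms] unfolding H1_inner_def by (simp add: algebra_simps)

lemma H1_inner_diff_right:
  assumes wd: "weak_deriv_H1 L f f'" and wd1: "weak_deriv_H1 L h1 k1" and wd2: "weak_deriv_H1 L h2 k2"
  shows "H1_inner L lam mu f f' (\<lambda>t. h1 t - h2 t) (\<lambda>t. k1 t - k2 t)
       = H1_inner L lam mu f f' h1 k1 - H1_inner L lam mu f f' h2 k2"
proof -
  note int1 = weak_deriv_H1_set_integrable_mult[OF wd wd1]
  note int2 = weak_deriv_H1_set_integrable_mult[OF wd wd2]
  have d1: "(LINT t:{-L..L}|lborel. f t * (h1 t - h2 t))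
      = (LINT t:{-L..L}|lborel. f t * h1 t) - (LINT t:{-L..L}|lborel. f t * h2 t)"
    using set_integral_diff(2)[OF int1(1) int2(1)] by (simp add: right_diff_distrib)
  have d2: "(LINT t:{-L..L}|lborel. f' t * (k1 t - k2 t))
      = (LINT t:{-L..L}|lborel. f' t * k1 t) - (LINT t:{-L..L}|lborel. f' t * k2 t)"
    using set_integral_diff(2)[OF int1(2) int2(2)] by (simp add: right_diff_distrib)
  show ?thesis
    unfolding H1_inner_eq[OF wd weak_deriv_H1_diff[OF wd1 wd2]] H1_inner_eq[OF wd wd1] H1_inner_eq[OF wd wd2] d1 d2
    by (simp add: algebra_simps)
qed

lemma H1_inner_self_eq_0D:
  assumes "L > 0" "lam > 0" "mu \<ge> 0" and wd: "weak_deriv_H1 L h g"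
    and "H1_inner L lam mu h g h g = 0" and "y \<in> {-L..L}"
  shows "h y = 0"
proof -
  have hh: "set_integrable lborel {-L..L} (\<lambda>t. h t * h t)"
    using weak_deriv_H1_set_integrable_mult(1)[OF wd wd] .
  define Ih where "Ih = (LINT t:{-L..L}|lborel. h t * h t)"
  define Ig where "Ig = (LINT t:{-L..L}|lborel. g t * g t)"
  have "0 \<le> Ih" "0 \<le> Ig"
    unfolding Ih_def Ig_def set_lebesgue_integral_def
    by (auto intro!: integral_nonneg_AE simp: indicator_def)
  moreover have "lam * Ih + (lam + mu) * Ig = 0"
    using assms(5) unfolding H1_inner_eq[OF wd wd] Ih_def Ig_def .
  ultimately have "lam * Ih = 0"
    using mult_nonneg_nonneg[of lam Ih] mult_nonneg_nonneg[of "lam + mu" Ig] assms(2,3) by linarith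
  then have "integral {-L..L} (\<lambda>t. h t * h t) = 0"
    using assms(2) set_borel_integral_eq_integral(2)[OF hh] by (simp add: Ih_def)
  then have "\<forall>t\<in>{-L..L}. h t * h t = 0"
    using integral_eq_0_iff[of "-L" L "\<lambda>t. h t * h t"] \<open>L > 0\<close>
      continuous_on_mult[OF weak_deriv_H1_continuous_on[OF wd] weak_deriv_H1_continuous_on[OF wd]]
    by simp
  then show ?thesis using \<open>y \<in> {-L..L}\<close> by simp
qed

section \<open>The reproducing kernel\<close>

lemma reproducing_kernel_H1_unique:
  assumes "L > 0" "lam > 0" "mu \<ge> 0"
    and K1: "is_reproducing_kernel_H1 L lam mu K1" and K2: "is_reproducing_kernel_H1 L lam mu K2"
    and x: "x \<in> {-L..L}" and "y \<in> {-L..L}"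
  shows "K1 x y = K2 x y"
proof -
  obtain k1 where wd1: "weak_deriv_H1 L (K1 x) k1"
    and rep1: "\<And>f f'. weak_deriv_H1 L f f' \<Longrightarrow> f x = H1_inner L lam mu f f' (K1 x) k1"
    using K1 x unfolding is_reproducing_kernel_H1_def by blast
  obtain k2 where wd2: "weak_deriv_H1 L (K2 x) k2"
    and rep2: "\<And>f f'. weak_deriv_H1 L f f' \<Longrightarrow> f x = H1_inner L lam mu f f' (K2 x) k2"
    using K2 x unfolding is_reproducing_kernel_H1_def by blast
  define h where "h = (\<lambda>t. K1 x t - K2 x t)"
  define g where "g = (\<lambda>t. k1 t - k2 t)"
  have wd: "weak_deriv_H1 L h g"
    unfolding h_def g_def by (rule weak_deriv_H1_diff[OF wd1 wd2])
  have "H1_inner L lam mu h g h g = H1_inner L lam mu h g (K1 x) k1 - H1_inner L lam mu h g (K2 x) k2"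
    unfolding h_def g_def by (rule H1_inner_diff_right[OF wd[unfolded h_def g_def] wd1 wd2])
  also have "\<dots> = 0" using rep1[OF wd] rep2[OF wd] by simp
  finally have "h y = 0" by (rule H1_inner_self_eq_0D[OF assms(1-3) wd _ \<open>y \<in> {-L..L}\<close>])
  then show ?thesis by (simp add: h_def)
qed

lemma Green_function_reproduces:
  fixes u v u' v' :: "real \<Rightarrow> real" and \<kappa> :: real
  assumes x: "x \<in> {-L..L}"
    and u: "\<And>t. (u has_real_derivative u' t) (at t)" and u': "\<And>t. (u' has_real_derivative \<kappa> * u t) (at t)"
    and v: "\<And>t. (v has_real_derivative v' t) (at t)" and v': "\<And>t. (v' has_real_derivative \<kappa> * v t) (at t)"
    and \<kappa>: "(lam + mu) * \<kappa> = lam" and u'_L: "u' (-L) = 0" and v'_L: "v' L = 0"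
    and W: "(lam + mu) * (u' x * v x - u x * v' x) = 1"
  defines "K \<equiv> \<lambda>t. if t \<le> x then u t * v x else u x * v t"
    and "k \<equiv> \<lambda>t. if t \<le> x then u' t * v x else u x * v' t"
  shows "weak_deriv_H1 L K k" and "\<And>f f'. weak_deriv_H1 L f f' \<Longrightarrow> f x = H1_inner L lam mu f f' K k"
proof -
  have cont: "continuous_on UNIV u" "continuous_on UNIV v" "continuous_on UNIV u'" "continuous_on UNIV v'"
    using u v u' v' by (auto intro!: continuous_at_imp_continuous_on DERIV_isCont)
  have dA: "((\<lambda>t. u t * v x) has_real_derivative u' t * v x) (at t)"
    "((\<lambda>t. u' t * v x) has_real_derivative \<kappa> * (u t * v x)) (at t)" for t
    using DERIV_cmult_right[OF u, where c="v x"] DERIV_cmult_right[OF u', where c="v x"] by (simp_all add: mult.assoc)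
  have dB: "((\<lambda>t. u x * v t) has_real_derivative u x * v' t) (at t)"
    "((\<lambda>t. u x * v' t) has_real_derivative \<kappa> * (u x * v t)) (at t)" for t
    using DERIV_cmult[OF v, where c="u x"] DERIV_cmult[OF v', where c="u x"] by (simp_all add: ac_simps)
  show wdK: "weak_deriv_H1 L K k"
    unfolding K_def k_def
    by (rule weak_deriv_H1_piecewise[OF x dA(1) dB(1)]) (auto intro!: continuous_intros cont)
  fix f f' assume wd: "weak_deriv_H1 L f f'"
  have f_cont: "continuous_on {-L..L} f" by (rule weak_deriv_H1_continuous_on[OF wd])
  have f'_int: "set_integrable lborel {-L..L} f'" by (rule weak_deriv_H1_set_integrable[OF wd])
  have left: "(LINT t:{-L..x}|lborel. f' t * (u' t * v x))
      = f x * (u' x * v x) - \<kappa> * (LINT t:{-L..x}|lborel. f t * (u t * v x))"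
    using weak_deriv_H1_integral_by_parts_eigen[OF wd _ _ _ dA] x u'_L by simp
  have right: "(LINT t:{x..L}|lborel. f' t * (u x * v' t))
      = - f x * (u x * v' x) - \<kappa> * (LINT t:{x..L}|lborel. f t * (u x * v t))"
    using weak_deriv_H1_integral_by_parts_eigen[OF wd _ _ _ dB] x v'_L by simp
  have fK: "(LINT t:{-L..L}|lborel. f t * K t)
      = (LINT t:{-L..x}|lborel. f t * (u t * v x)) + (LINT t:{x..L}|lborel. f t * (u x * v t))"
    using x unfolding K_def
    by (intro set_integral_Icc_piecewise(2) borel_integrable_atLeastAtMost' continuous_intros
        continuous_on_subset[OF f_cont] continuous_on_subset[OF cont(1)] continuous_on_subset[OF cont(2)]) auto
  have f'k: "(LINT t:{-L..L}|lborel. f' t * k t)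
      = (LINT t:{-L..x}|lborel. f' t * (u' t * v x)) + (LINT t:{x..L}|lborel. f' t * (u x * v' t))"
    using x unfolding k_def
    by (intro set_integral_Icc_piecewise(2) set_integrable_mult_continuous_on set_integrable_subset[OF f'_int]
        continuous_intros continuous_on_subset[OF cont(3)] continuous_on_subset[OF cont(4)]) auto
  have "H1_inner L lam mu f f' K k
      = (lam - (lam + mu) * \<kappa>) * (LINT t:{-L..L}|lborel. f t * K t)
        + f x * ((lam + mu) * (u' x * v x - u x * v' x))"
    unfolding H1_inner_eq[OF wd wdK] f'k left right fK by (simp add: algebra_simps)
  then show "f x = H1_inner L lam mu f f' K k" using \<kappa> W by simp
qed

lemma is_reproducing_kernel_H1_Green_function:
  fixes u v u' v' :: "real \<Rightarrow> real" and \<kappa> :: real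
  assumes "\<And>t. (u has_real_derivative u' t) (at t)" "\<And>t. (u' has_real_derivative \<kappa> * u t) (at t)"
    and "\<And>t. (v has_real_derivative v' t) (at t)" "\<And>t. (v' has_real_derivative \<kappa> * v t) (at t)"
    and "(lam + mu) * \<kappa> = lam" and "u' (-L) = 0" and "v' L = 0"
    and W: "\<And>x. x \<in> {-L..L} \<Longrightarrow> (lam + mu) * (u' x * v x - u x * v' x) = 1"
  shows "is_reproducing_kernel_H1 L lam mu (\<lambda>x y. if y \<le> x then u y * v x else u x * v y)"
  unfolding is_reproducing_kernel_H1_def
proof
  fix x assume x: "x \<in> {-L..L}"
  show "\<exists>k. weak_deriv_H1 L (\<lambda>y. if y \<le> x then u y * v x else u x * v y) k \<and>
          (\<forall>f f'. weak_deriv_H1 L f f' \<longrightarrow> f x = H1_inner L lam mu f f' (\<lambda>y. if y \<le> x then u y * v x else u x * v y) k)"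
    using Green_function_reproduces[OF x assms(1-7) W[OF x]] by blast
qed

lemma cosh_kernel_identity:
  fixes g L x y :: real
  shows "(cosh (2 * g * L) + cosh (2 * g * x)) * cosh (g * (x - y))
           + ((1 - 2 * (if x > y then 1 else 0)) * sinh (2 * g * L) - sinh (2 * g * x)) * sinh (g * (x - y))
         = 2 * (cosh (g * (L + min x y)) * cosh (g * (L - max x y)))"
proof -
  have prod: "2 * (cosh a * cosh b) = cosh (a + b) + cosh (a - b)" for a b :: real
    by (simp add: cosh_add cosh_diff)
  define p where "p = g * (x - y)"
  show ?thesis
  proof (cases "x > y")
    case True
    have "g * (L + y) + g * (L - x) = 2 * g * L - p" "g * (L + y) - g * (L - x) = 2 * g * x - p"
      by (simp_all add: p_def algebra_simps)
    from prod[of "g * (L + y)" "g * (L - x)", unfolded this cosh_diff]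
    show ?thesis using True unfolding p_def[symmetric] by (simp add: min_absorb2 max_absorb1 algebra_simps)
  next
    case False
    have "g * (L + x) + g * (L - y) = 2 * g * L + p" "g * (L + x) - g * (L - y) = 2 * g * x - p"
      by (simp_all add: p_def algebra_simps)
    from prod[of "g * (L + x)" "g * (L - y)", unfolded this cosh_add cosh_diff]
    show ?thesis using False unfolding p_def[symmetric] by (simp add: min_absorb1 max_absorb2 algebra_simps)
  qed
qed

lemma is_reproducing_kernel_H1_cosh:
  fixes L lam mu \<gamma> :: real
  assumes "L > 0" "lam > 0" "\<gamma> > 0" and \<gamma>: "(lam + mu) * \<gamma>^2 = lam"
  shows "is_reproducing_kernel_H1 L lam mu
           (\<lambda>x y. \<gamma> / (lam * sinh (2 * \<gamma> * L)) * (cosh (\<gamma> * (L + min x y)) * cosh (\<gamma> * (L - max x y))))"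
proof -
  define c where "c = \<gamma> / (lam * sinh (2 * \<gamma> * L))"
  have "sinh (2 * \<gamma> * L) > 0" using assms by simp
  have "is_reproducing_kernel_H1 L lam mu
      (\<lambda>x y. if y \<le> x then cosh (\<gamma> * (L + y)) * (c * cosh (\<gamma> * (L - x)))
             else cosh (\<gamma> * (L + x)) * (c * cosh (\<gamma> * (L - y))))"
  proof (rule is_reproducing_kernel_H1_Green_function[where \<kappa>="\<gamma>^2"
        and u'="\<lambda>t. \<gamma> * sinh (\<gamma> * (L + t))" and v'="\<lambda>t. - c * \<gamma> * sinh (\<gamma> * (L - t))"])
    fix x :: real
    have "sinh (\<gamma> * (L + x)) * cosh (\<gamma> * (L - x)) + cosh (\<gamma> * (L + x)) * sinh (\<gamma> * (L - x))
        = sinh (2 * \<gamma> * L)"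
      using sinh_add[of "\<gamma> * (L + x)" "\<gamma> * (L - x)"] by (simp add: algebra_simps)
    note sinh_2\<gamma>L = this
    have "(lam + mu) * (\<gamma> * sinh (\<gamma> * (L + x)) * (c * cosh (\<gamma> * (L - x)))
        - cosh (\<gamma> * (L + x)) * (- c * \<gamma> * sinh (\<gamma> * (L - x))))
        = (lam + mu) * \<gamma> * c * (sinh (\<gamma> * (L + x)) * cosh (\<gamma> * (L - x))
            + cosh (\<gamma> * (L + x)) * sinh (\<gamma> * (L - x)))"
      by (simp add: algebra_simps)
    also have "\<dots> = (lam + mu) * \<gamma> * c * sinh (2 * \<gamma> * L)"
      by (simp only: sinh_2\<gamma>L)
    also have "\<dots> = (lam + mu) * \<gamma>^2 / lam"
      using \<open>sinh (2 * \<gamma> * L) > 0\<close> \<open>L > 0\<close> by (simp add: c_def power2_eq_square)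
    finally show "(lam + mu) * (\<gamma> * sinh (\<gamma> * (L + x)) * (c * cosh (\<gamma> * (L - x)))
        - cosh (\<gamma> * (L + x)) * (- c * \<gamma> * sinh (\<gamma> * (L - x)))) = 1"
      using \<gamma> \<open>lam > 0\<close> by simp
  qed (use \<gamma> in \<open>auto intro!: derivative_eq_intros simp: power2_eq_square\<close>)
  moreover have "(\<lambda>x y. if y \<le> x then cosh (\<gamma> * (L + y)) * (c * cosh (\<gamma> * (L - x)))
             else cosh (\<gamma> * (L + x)) * (c * cosh (\<gamma> * (L - y))))
      = (\<lambda>x y. c * (cosh (\<gamma> * (L + min x y)) * cosh (\<gamma> * (L - max x y))))"
    by (auto simp: fun_eq_iff min_def max_def)
  ultimately show ?thesis by (simp add: c_def)
qed

theorem mainTheorem9: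
  fixes L lam mu :: real
  assumes "L > 0" and "lam > 0" and "mu \<ge> 0"
  defines "\<gamma> \<equiv> sqrt (lam / (lam + mu))"
  defines "Kf \<equiv> (\<lambda>x y. \<gamma> / (2 * lam * sinh (2 * \<gamma> * L)) *
      ((cosh (2 * \<gamma> * L) + cosh (2 * \<gamma> * x)) * cosh (\<gamma> * (x - y))
       + ((1 - 2 * (if x > y then 1 else 0)) * sinh (2 * \<gamma> * L) - sinh (2 * \<gamma> * x))
         * sinh (\<gamma> * (x - y))))"
  shows "is_reproducing_kernel_H1 L lam mu Kf \<and>
         (\<forall>K. is_reproducing_kernel_H1 L lam mu K \<longrightarrow>
              (\<forall>x\<in>{-L..L}. \<forall>y\<in>{-L..L}. K x y = Kf x y))"
proof -
  have "lam / (lam + mu) > 0" using assms by simp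
  then have "\<gamma> > 0" and \<gamma>2: "(lam + mu) * \<gamma>^2 = lam"
    unfolding \<gamma>_def using assms by auto
  have "Kf = (\<lambda>x y. \<gamma> / (lam * sinh (2 * \<gamma> * L)) * (cosh (\<gamma> * (L + min x y)) * cosh (\<gamma> * (L - max x y))))"
    unfolding Kf_def cosh_kernel_identity by (simp add: fun_eq_iff)
  then have RK: "is_reproducing_kernel_H1 L lam mu Kf"
    using is_reproducing_kernel_H1_cosh[OF \<open>L > 0\<close> \<open>lam > 0\<close> \<open>\<gamma> > 0\<close> \<gamma>2] by simp
  show ?thesis using RK reproducing_kernel_H1_unique[OF assms(1-3) _ RK] by blast
qed

end
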